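(* Let $G=(V,w)$ be a weighted graph, let $Z\in\mathcal{M}(G)$ be a crossless non-star minimum cut with shores $X_0$, $X_1=V\setminus X_0$, and let $\{G_0,G_1\}=\mathrm{sep}(G,Z)$. Then $\mathrm{cdim}(G)\le\mathrm{cdim}(G_0)+\mathrm{cdim}(G_1)-1$, and if $Z$ is connected then equality holds.
   Context: A weighted graph $G=(V,w)$ has nonnegative weights on unordered pairs of distinct vertices; its edge set is $E=\{e:w(e)>0\}$. For $\emptyset\ne X\subsetneq V$, $\Delta(X)$ is the set of edges with exactly one endpoint in $X$ (a cut with shores $X$, $V\setminus X$). A cut is a star cut if one shore is a single vertex, otherwise non-star. $\mathcal{M}(G)$ is the set of minimum-weight cuts; $\chi(S)$ is the characteristic vector of $S$ indexed by the edges; $\mathrm{cdim}(G)=\dim\,\mathrm{span}\{\chi(S):S\in\mathcal{M}(G)\}$. Sets $X,Y$ cross if $X\cap Y$, $X\setminus Y$, $Y\setminus X$, $V\setminus(X\cup Y)$ are all nonempty; cuts cross if their shores cross; a mincut is crossless if no other mincut crosses it. A cut $S$ is connected if the unweighted graph whose vertices are the endpoints of edges of $S$ and whose edge set is $S$ is connected. The separation $\mathrm{sep}(G,Z)$ is the pair $G_b=(X_b\cup\{v_{1-b}\},w_b)$, $b\in\{0,1\}$, with new vertices $v_0,v_1$, $w_b(\{x,y\})=w(\{x,y\})$ for $x,y\in X_b$ and $w_b(\{x,v_{1-b}\})=\sum_{y\in X_{1-b}}w(\{x,y\})$ for $x\in X_b$. *)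

theory Defs
  imports "HOL-Analysis.Analysis" "HOL-Library.Function_Algebras"
begin

definition weighted_graph :: "'v set \<Rightarrow> ('v set \<Rightarrow> real) \<Rightarrow> bool" where
  "weighted_graph V w \<longleftrightarrow> finite V \<and> (\<forall>x\<in>V. \<forall>y\<in>V. x \<noteq> y \<longrightarrow> w {x, y} \<ge> 0)"

definition edges :: "'v set \<Rightarrow> ('v set \<Rightarrow> real) \<Rightarrow> 'v set set" where
  "edges V w = {e. \<exists>x\<in>V. \<exists>y\<in>V. x \<noteq> y \<and> e = {x, y} \<and> w e > 0}"

definition cut :: "'v set \<Rightarrow> ('v set \<Rightarrow> real) \<Rightarrow> 'v set \<Rightarrow> 'v set set" where
  "cut V w X = {e \<in> edges V w. card (e \<inter> X) = 1}"

definition is_shore :: "'v set \<Rightarrow> 'v set \<Rightarrow> bool" where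
  "is_shore V X \<longleftrightarrow> X \<noteq> {} \<and> X \<subset> V"

definition cut_weight :: "('v set \<Rightarrow> real) \<Rightarrow> 'v set set \<Rightarrow> real" where
  "cut_weight w S = (\<Sum>e\<in>S. w e)"

definition mincuts :: "'v set \<Rightarrow> ('v set \<Rightarrow> real) \<Rightarrow> 'v set set set" where
  "mincuts V w = {cut V w X | X. is_shore V X \<and>
      (\<forall>Y. is_shore V Y \<longrightarrow> cut_weight w (cut V w X) \<le> cut_weight w (cut V w Y))}"

definition chi :: "'v set set \<Rightarrow> 'v set \<Rightarrow> real" where
  "chi S = indicator S"

definition cdim :: "'v set \<Rightarrow> ('v set \<Rightarrow> real) \<Rightarrow> nat" where
  "cdim V w = vector_space.dim (\<lambda>(c::real) (f::'v set \<Rightarrow> real). (\<lambda>e. c * f e)) (chi ` mincuts V w)"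

definition crosses :: "'v set \<Rightarrow> 'v set \<Rightarrow> 'v set \<Rightarrow> bool" where
  "crosses V X Y \<longleftrightarrow> X \<inter> Y \<noteq> {} \<and> X - Y \<noteq> {} \<and> Y - X \<noteq> {} \<and> V - (X \<union> Y) \<noteq> {}"

definition crossless :: "'v set \<Rightarrow> ('v set \<Rightarrow> real) \<Rightarrow> 'v set \<Rightarrow> bool" where
  "crossless V w X \<longleftrightarrow> (\<forall>Y. is_shore V Y \<and> cut V w Y \<in> mincuts V w \<longrightarrow> \<not> crosses V X Y)"

definition star_cut :: "'v set \<Rightarrow> ('v set \<Rightarrow> real) \<Rightarrow> 'v set set \<Rightarrow> bool" where
  "star_cut V w S \<longleftrightarrow> (\<exists>X. is_shore V X \<and> S = cut V w X \<and> (card X = 1 \<or> card (V - X) = 1))"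

definition edge_rel :: "'v set set \<Rightarrow> ('v \<times> 'v) set" where
  "edge_rel S = {(x, y). {x, y} \<in> S}"

definition connected_edges :: "'v set set \<Rightarrow> bool" where
  "connected_edges S \<longleftrightarrow> (\<forall>x\<in>\<Union>S. \<forall>y\<in>\<Union>S. (x, y) \<in> (edge_rel S)\<^sup>*)"

definition connected_graph :: "'v set \<Rightarrow> ('v set \<Rightarrow> real) \<Rightarrow> bool" where
  "connected_graph V w \<longleftrightarrow> (\<forall>x\<in>V. \<forall>y\<in>V. (x, y) \<in> (edge_rel (edges V w))\<^sup>*)"

text \<open>Separation: G_b has vertex set X_b plus a new vertex (here None) standing for
  the contracted other shore Y = X_(1-b).\<close>
definition sep_V :: "'v set \<Rightarrow> 'v option set" where
  "sep_V X = Some ` X \<union> {None}"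

definition sep_w :: "('v set \<Rightarrow> real) \<Rightarrow> 'v set \<Rightarrow> 'v set \<Rightarrow> 'v option set \<Rightarrow> real" where
  "sep_w w X Y e =
     (if None \<notin> e then w (the ` e)
      else (\<Sum>x\<in>X. if e = {Some x, None} then (\<Sum>y\<in>Y. w {x, y}) else 0))"

end

theory Submission
  imports Defs
begin

(*
  By crosslessness, every minimum cut of G has a shore inside X0 or inside X1 = V - X0, and the
  minimum cuts with a shore inside X_b are exactly the minimum cuts of G_b, read back in G.
  Pulling edge functions of G_b back along the contraction of X_(1-b) to the new vertex is linear
  and injective on functions supported on the edges of G_b, so cdim G_b is the dimension of the
  span of the minimum cuts of G with a shore in X_b. Both spans contain chi Z, which is counted
  twice; this gives the inequality. If Z is connected, the two spans meet only in the multiples of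
  chi Z: a common element vanishes off Z and takes equal values on cut edges sharing an
  endpoint, on either side, hence is constant on Z.
*)

context vector_space
begin

lemma independent_Un:
  assumes S: "independent S" and T: "independent T" and ST: "span S \<inter> span T \<subseteq> {0}"
  shows "independent (S \<union> T)"
  unfolding independent_explicit_finite_subsets
proof (intro allI impI ballI)
  fix U u v
  assume U: "U \<subseteq> S \<union> T" "finite U" and sum0: "(\<Sum>v\<in>U. scale (u v) v) = 0" and v: "v \<in> U"
  define x where "x = (\<Sum>v\<in>U \<inter> S. scale (u v) v)"
  define y where "y = (\<Sum>v\<in>U - S. scale (u v) v)"
  have "x + y = 0"
    using sum0 U(2) unfolding x_def y_def by (simp add: sum.Int_Diff[symmetric])
  moreover have "x \<in> span S"
    unfolding x_def by (intro span_sum span_scale span_base) auto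
  moreover have "y \<in> span T"
    unfolding y_def using U(1) by (intro span_sum span_scale span_base) auto
  moreover have "x = - y"
    using \<open>x + y = 0\<close> by (metis add_eq_0_iff minus_minus)
  ultimately have "x \<in> span S \<inter> span T"
    using span_neg[of y T] by simp
  then have "x = 0" "y = 0"
    using ST \<open>x + y = 0\<close> by auto
  show "u v = 0"
  proof (cases "v \<in> S")
    case True
    show ?thesis
      using independentD[OF S _ _ \<open>x = 0\<close>[unfolded x_def], of v] U(2) True v by simp
  next
    case False
    have "U - S \<subseteq> T"
      using U(1) by blast
    then show ?thesis
      using independentD[OF T _ _ \<open>y = 0\<close>[unfolded y_def], of v] U(2) False v by simp
  qed
qed

lemma basis_containing:
  assumes "finite A" "z \<in> span A" "z \<noteq> 0"
  obtains B where "z \<in> B" "independent B" "span B = span A" "finite B" "card B = dim A"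
proof -
  obtain B where B: "z \<in> B" "B \<subseteq> span A" "independent B" "span A \<subseteq> span B"
    using maximal_independent_subset_extend[of "{z}" "span A"] assms(2,3) by auto
  have "span B = span A"
    using B(2,4) span_minimal[OF B(2) subspace_span] by blast
  moreover have "finite B"
    using independent_span_bound[OF assms(1) B(3,2)] by blast
  ultimately show ?thesis
    using that B(1,3) dim_span_eq_card_independent[OF B(3)] by (metis dim_span)
qed

text \<open>Extend z to bases C of span A and D' of span B: then C \<union> (D' - {z}) spans A \<union> B, and it
  is independent when the two spans meet only in the line through z.\<close>

lemma dim_Un_shared_vector:
  assumes A: "finite A" and B: "finite B" and zA: "z \<in> span A" and zB: "z \<in> span B"
    and "z \<noteq> 0"
  shows "dim (A \<union> B) + 1 \<le> dim A + dim B"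
    and "span A \<inter> span B \<subseteq> span {z} \<Longrightarrow> dim (A \<union> B) + 1 = dim A + dim B"
proof -
  obtain C where C: "z \<in> C" "independent C" "span C = span A" "finite C" "card C = dim A"
    using basis_containing[OF A zA \<open>z \<noteq> 0\<close>] .
  obtain D' where D': "z \<in> D'" "independent D'" "span D' = span B" "finite D'" "card D' = dim B"
    using basis_containing[OF B zB \<open>z \<noteq> 0\<close>] .
  define D where "D = D' - {z}"
  have D'_eq: "D' = insert z D" and "z \<notin> D" and "finite D"
    using D'(1,4) by (auto simp: D_def)
  have card_D: "card D + 1 = dim B"
    using D'(5) \<open>finite D\<close> \<open>z \<notin> D\<close> unfolding D'_eq by simp
  have span_CD: "span (C \<union> D) = span (A \<union> B)"
  proof -
    have "span (C \<union> D) = span (C \<union> D')"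
      using C(1) D'_eq by (simp add: insert_absorb)
    also have "\<dots> = span (A \<union> B)"
      by (simp add: C(3) D'(3) span_Un)
    finally show ?thesis .
  qed
  have "dim (A \<union> B) \<le> card (C \<union> D)"
    using dim_le_card[of "A \<union> B" "C \<union> D"] span_CD span_superset C(4) \<open>finite D\<close> by auto
  also have "\<dots> \<le> card C + card D"
    by (rule card_Un_le)
  finally show "dim (A \<union> B) + 1 \<le> dim A + dim B"
    using C(5) card_D by simp
  assume AB: "span A \<inter> span B \<subseteq> span {z}"
  have CD0: "span C \<inter> span D \<subseteq> {0}"
  proof
    fix y assume y: "y \<in> span C \<inter> span D"
    have "span D \<subseteq> span B"
      using D'(3) D'_eq span_mono[of D D'] by blast
    then obtain c where c: "y = scale c z"
      using y AB C(3) by (auto simp: span_singleton)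
    have "z \<notin> span D"
      using D'(2) \<open>z \<notin> D\<close> unfolding D'_eq by (simp add: independent_insert)
    then have "c = 0"
      using y c span_scale[of y D "inverse c"] by (cases "c = 0") auto
    then show "y \<in> {0}"
      using c by simp
  qed
  have indep: "independent (C \<union> D)"
    using independent_mono[OF D'(2)] by (intro independent_Un[OF C(2) _ CD0]) (auto simp: D_def)
  have "0 \<notin> C"
    using C(2) dependent_zero by blast
  then have "C \<inter> D = {}"
    using CD0 span_superset[of C] span_superset[of D] by blast
  have "dim (A \<union> B) = card (C \<union> D)"
    using span_eq_dim[OF span_CD] dim_eq_card_independent[OF indep] by simp
  also have "\<dots> = card C + card D"
    using card_Un_disjoint[OF C(4) \<open>finite D\<close> \<open>C \<inter> D = {}\<close>] .
  finally show "dim (A \<union> B) + 1 = dim A + dim B"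
    using C(5) card_D by simp
qed

end

lemma dim_image_eq_inj:
  assumes "Vector_Spaces.linear s1 s2 f" and "inj_on f (module.span s1 S)"
  shows "vector_space.dim s2 (f ` S) = vector_space.dim s1 S"
proof -
  interpret Vector_Spaces.linear s1 s2 f
    by fact
  obtain B where B: "B \<subseteq> S" "vs1.independent B" "S \<subseteq> vs1.span B" "card B = vs1.dim S"
    using vs1.basis_exists[of S] by blast
  have span_B: "vs1.span B = vs1.span S"
    using B(1,3) vs1.span_mono[of B S] vs1.span_minimal[OF B(3) vs1.subspace_span] by blast
  have inj: "inj_on f (vs1.span B)"
    using assms(2) span_B by simp
  have "vs2.dim (f ` S) = vs2.dim (f ` B)"
    using vs2.span_eq_dim span_image span_B by metis
  also have "\<dots> = card (f ` B)"
    using vs2.dim_eq_card_independent[OF independent_injective_image[OF B(2) inj]] .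
  also have "\<dots> = card B"
    using card_image[OF inj_on_subset[OF inj vs1.span_superset]] .
  finally show ?thesis
    using B(4) by simp
qed

interpretation fun_vs: vector_space "\<lambda>(c::real) (f::'a \<Rightarrow> real) e. c * f e"
  by unfold_locales (auto simp: algebra_simps fun_eq_iff)

lemma card_doubleton_Int_eq_1_iff:
  "x \<noteq> y \<Longrightarrow> card ({x, y} \<inter> Y) = 1 \<longleftrightarrow> (x \<in> Y \<longleftrightarrow> y \<notin> Y)"
  by (cases "x \<in> Y"; cases "y \<in> Y") auto

lemma doubleton_mem_edges_iff:
  "x \<in> V \<Longrightarrow> y \<in> V \<Longrightarrow> x \<noteq> y \<Longrightarrow> {x, y} \<in> edges V w \<longleftrightarrow> w {x, y} > 0"
  unfolding edges_def by blast

lemma mem_cut_iff: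
  "e \<in> cut V w Y \<longleftrightarrow>
     (\<exists>x\<in>V. \<exists>y\<in>V. x \<noteq> y \<and> e = {x, y} \<and> w {x, y} > 0 \<and> (x \<in> Y \<longleftrightarrow> y \<notin> Y))"
proof
  assume "e \<in> cut V w Y"
  then obtain x y where xy: "x \<in> V" "y \<in> V" "x \<noteq> y" "e = {x, y}" "w {x, y} > 0"
    and "card (e \<inter> Y) = 1"
    unfolding cut_def edges_def by blast
  then have "x \<in> Y \<longleftrightarrow> y \<notin> Y"
    using card_doubleton_Int_eq_1_iff[of x y Y] by simp
  then show "\<exists>x\<in>V. \<exists>y\<in>V. x \<noteq> y \<and> e = {x, y} \<and> w {x, y} > 0 \<and> (x \<in> Y \<longleftrightarrow> y \<notin> Y)"
    using xy by blast
next
  assume "\<exists>x\<in>V. \<exists>y\<in>V. x \<noteq> y \<and> e = {x, y} \<and> w {x, y} > 0 \<and> (x \<in> Y \<longleftrightarrow> y \<notin> Y)"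
  then obtain x y where "x \<in> V" "y \<in> V" "x \<noteq> y" "e = {x, y}" "w {x, y} > 0" "x \<in> Y \<longleftrightarrow> y \<notin> Y"
    by blast
  then show "e \<in> cut V w Y"
    unfolding cut_def edges_def using card_doubleton_Int_eq_1_iff[of x y Y] by auto
qed

lemma doubleton_mem_cut_iff:
  assumes "x \<in> V" "y \<in> V" "x \<noteq> y"
  shows "{x, y} \<in> cut V w Y \<longleftrightarrow> w {x, y} > 0 \<and> (x \<in> Y \<longleftrightarrow> y \<notin> Y)"
  using assms card_doubleton_Int_eq_1_iff[OF assms(3)] doubleton_mem_edges_iff[OF assms]
  unfolding cut_def by auto

lemma cut_subset_edges: "cut V w Y \<subseteq> edges V w"
  unfolding cut_def by blast

lemma cut_Diff: "cut V w (V - Y) = cut V w Y"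
  unfolding mem_cut_iff set_eq_iff by blast

lemma cut_weight_eq_sum:
  assumes "weighted_graph V w" and "Y \<subseteq> V"
  shows "cut_weight w (cut V w Y) = (\<Sum>a\<in>Y. \<Sum>b\<in>V - Y. w {a, b})"
proof -
  have "finite V" and nonneg: "\<And>x y. x \<in> V \<Longrightarrow> y \<in> V \<Longrightarrow> x \<noteq> y \<Longrightarrow> w {x, y} \<ge> 0"
    using assms(1) unfolding weighted_graph_def by auto
  define P where "P = {p \<in> Y \<times> (V - Y). w {fst p, snd p} > 0}"
  have cut_eq: "cut V w Y = (\<lambda>p. {fst p, snd p}) ` P"
  proof (intro set_eqI iffI)
    fix e assume "e \<in> cut V w Y"
    then obtain x y where xy: "x \<in> V" "y \<in> V" "e = {x, y}" "w {x, y} > 0" "x \<in> Y \<longleftrightarrow> y \<notin> Y"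
      unfolding mem_cut_iff by blast
    show "e \<in> (\<lambda>p. {fst p, snd p}) ` P"
    proof (cases "x \<in> Y")
      case True
      then show ?thesis
        using xy by (intro rev_image_eqI[of "(x, y)"]) (auto simp: P_def)
    next
      case False
      then show ?thesis
        using xy by (intro rev_image_eqI[of "(y, x)"]) (auto simp: P_def insert_commute)
    qed
  next
    fix e assume "e \<in> (\<lambda>p. {fst p, snd p}) ` P"
    then obtain a b where ab: "a \<in> Y" "b \<in> V - Y" "w {a, b} > 0" "e = {a, b}"
      by (auto simp: P_def)
    then have "a \<in> V" "a \<noteq> b"
      using assms(2) by auto
    then show "e \<in> cut V w Y"
      using ab doubleton_mem_cut_iff[of a V b w Y] by simp
  qed
  have inj: "inj_on (\<lambda>p. {fst p, snd p}) P"
  proof (rule inj_onI)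
    fix p q assume "p \<in> P" "q \<in> P" "{fst p, snd p} = {fst q, snd q}"
    then show "p = q"
      by (auto simp: P_def doubleton_eq_iff prod_eq_iff)
  qed
  have fin: "finite (Y \<times> (V - Y))"
    using \<open>finite V\<close> assms(2) finite_subset by blast
  have "cut_weight w (cut V w Y) = (\<Sum>p\<in>P. w {fst p, snd p})"
    unfolding cut_weight_def cut_eq by (simp add: sum.reindex[OF inj])
  also have "\<dots> = (\<Sum>p\<in>Y \<times> (V - Y). w {fst p, snd p})"
  proof (rule sum.mono_neutral_left[OF fin])
    show "\<forall>p\<in>Y \<times> (V - Y) - P. w {fst p, snd p} = 0"
    proof
      fix p assume p: "p \<in> Y \<times> (V - Y) - P"
      then have "w {fst p, snd p} \<ge> 0"
        using nonneg assms(2) by (metis DiffD1 DiffD2 mem_Times_iff subsetD)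
      then show "w {fst p, snd p} = 0"
        using p by (simp add: P_def)
    qed
  qed (auto simp: P_def)
  also have "\<dots> = (\<Sum>a\<in>Y. \<Sum>b\<in>V - Y. w {a, b})"
    by (simp add: sum.cartesian_product split_def)
  finally show ?thesis .
qed

lemma mincuts_weight_le:
  assumes "cut V w X \<in> mincuts V w" "is_shore V Y"
  shows "cut_weight w (cut V w X) \<le> cut_weight w (cut V w Y)"
  using assms unfolding mincuts_def by force

lemma mincutsI:
  assumes "is_shore V X" "\<And>Y. is_shore V Y \<Longrightarrow> cut_weight w (cut V w X) \<le> cut_weight w (cut V w Y)"
  shows "cut V w X \<in> mincuts V w"
  using assms unfolding mincuts_def by blast

lemma mincuts_iff_weight_eq:
  assumes "cut V w X \<in> mincuts V w" "is_shore V Y"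
  shows "cut V w Y \<in> mincuts V w \<longleftrightarrow> cut_weight w (cut V w Y) = cut_weight w (cut V w X)"
proof
  obtain X' where "is_shore V X'" "cut V w X = cut V w X'"
    using assms(1) unfolding mincuts_def by blast
  moreover assume "cut V w Y \<in> mincuts V w"
  ultimately show "cut_weight w (cut V w Y) = cut_weight w (cut V w X)"
    using mincuts_weight_le assms by (metis order_antisym)
next
  assume "cut_weight w (cut V w Y) = cut_weight w (cut V w X)"
  then show "cut V w Y \<in> mincuts V w"
    using mincutsI[OF assms(2)] mincuts_weight_le[OF assms(1)] by simp
qed

definition mincut_shores_in :: "'v set \<Rightarrow> ('v set \<Rightarrow> real) \<Rightarrow> 'v set \<Rightarrow> 'v set set" where
  "mincut_shores_in V w X = {Y. Y \<noteq> {} \<and> Y \<subseteq> X \<and> cut V w Y \<in> mincuts V w}"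

lemma finite_mincut_shores_in: "finite X \<Longrightarrow> finite (mincut_shores_in V w X)"
  unfolding mincut_shores_in_def by (rule finite_subset[of _ "Pow X"]) auto

lemma mincuts_crossless_eq:
  assumes "crossless V w X"
  shows "mincuts V w = cut V w ` (mincut_shores_in V w X \<union> mincut_shores_in V w (V - X))"
    (is "_ = cut V w ` ?Q")
proof (intro set_eqI iffI)
  fix S assume "S \<in> mincuts V w"
  then obtain Y where S: "S = cut V w Y" "S \<in> mincuts V w" and Y: "is_shore V Y"
    unfolding mincuts_def by blast
  have S': "S = cut V w (V - Y)"
    using S(1) by (simp add: cut_Diff)
  have "Y \<noteq> {}" "V - Y \<noteq> {}" "Y \<subseteq> V"
    using Y unfolding is_shore_def by auto
  have mem: "S \<in> cut V w ` ?Q" if "Z \<in> ?Q" "S = cut V w Z" for Z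
    using that by blast
  have "\<not> crosses V X Y"
    using assms S Y unfolding crossless_def by blast
  then consider "X \<inter> Y = {}" | "X - Y = {}" | "Y - X = {}" | "V - (X \<union> Y) = {}"
    unfolding crosses_def by blast
  then show "S \<in> cut V w ` ?Q"
  proof cases
    case 1
    then have "Y \<subseteq> V - X"
      using \<open>Y \<subseteq> V\<close> by blast
    then show ?thesis
      using mem[OF _ S(1)] S \<open>Y \<noteq> {}\<close> by (simp add: mincut_shores_in_def)
  next
    case 2
    then have "V - Y \<subseteq> V - X"
      by blast
    then show ?thesis
      using mem[OF _ S'] S S' \<open>V - Y \<noteq> {}\<close> by (simp add: mincut_shores_in_def)
  next
    case 3
    then have "Y \<subseteq> X"
      by blast
    then show ?thesis
      using mem[OF _ S(1)] S \<open>Y \<noteq> {}\<close> by (simp add: mincut_shores_in_def)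
  next
    case 4
    then have "V - Y \<subseteq> X"
      by blast
    then show ?thesis
      using mem[OF _ S'] S S' \<open>V - Y \<noteq> {}\<close> by (simp add: mincut_shores_in_def)
  qed
next
  fix S assume "S \<in> cut V w ` ?Q"
  then show "S \<in> mincuts V w"
    unfolding mincut_shores_in_def by auto
qed

lemma sep_w_Some_Some: "sep_w w X Y {Some a, Some b} = w {a, b}"
  unfolding sep_w_def by simp

lemma sep_w_Some_None:
  assumes "a \<in> X" "finite X"
  shows "sep_w w X Y {Some a, None} = (\<Sum>b\<in>Y. w {a, b})"
proof -
  have "sep_w w X Y {Some a, None} =
      (\<Sum>x\<in>X. if {Some a, None} = {Some x, None} then \<Sum>b\<in>Y. w {x, b} else 0)"
    unfolding sep_w_def by simp
  also have "\<dots> = (\<Sum>x\<in>X. if x = a then \<Sum>b\<in>Y. w {x, b} else 0)"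
    by (rule sum.cong) (auto simp: doubleton_eq_iff)
  also have "\<dots> = (\<Sum>b\<in>Y. w {a, b})"
    using assms by simp
  finally show ?thesis .
qed

locale separation =
  fixes V :: "'v set" and w :: "'v set \<Rightarrow> real" and X :: "'v set"
  assumes weighted_graph: "weighted_graph V w"
    and shore: "is_shore V X"
    and mincut: "cut V w X \<in> mincuts V w"
begin

abbreviation V' :: "'v option set" where "V' \<equiv> sep_V X"
abbreviation w' :: "'v option set \<Rightarrow> real" where "w' \<equiv> sep_w w X (V - X)"

lemma finite_V: "finite V"
  using weighted_graph unfolding weighted_graph_def by blast

lemma X_subset: "X \<subseteq> V" and X_ne: "X \<noteq> {}" and compl_X_ne: "V - X \<noteq> {}"
  using shore unfolding is_shore_def by auto

lemma finite_X: "finite X"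
  using finite_V X_subset finite_subset by blast

lemma weight_nonneg: "x \<in> V \<Longrightarrow> y \<in> V \<Longrightarrow> x \<noteq> y \<Longrightarrow> 0 \<le> w {x, y}"
  using weighted_graph unfolding weighted_graph_def by blast

lemma w'_Some_None: "a \<in> X \<Longrightarrow> w' {Some a, None} = (\<Sum>b\<in>V - X. w {a, b})"
  using sep_w_Some_None[OF _ finite_X] by blast

lemma w'_Some_None_ge: "a \<in> X \<Longrightarrow> b \<in> V - X \<Longrightarrow> w {a, b} \<le> w' {Some a, None}"
  unfolding w'_Some_None
  by (rule member_le_sum) (use X_subset finite_V weight_nonneg in auto)

lemma w'_Some_None_pos:
  assumes "a \<in> X" "w' {Some a, None} > 0"
  obtains b where "b \<in> V - X" "w {a, b} > 0"
  using assms sum_nonpos[of "V - X" "\<lambda>b. w {a, b}"] w'_Some_None by (force simp: not_less)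

lemma weighted_graph_sep: "weighted_graph V' w'"
  unfolding weighted_graph_def
proof (intro conjI ballI impI)
  show "finite V'"
    using finite_X by (simp add: sep_V_def)
  have "0 \<le> w' {Some a, None}" if "a \<in> X" for a
    unfolding w'_Some_None[OF that] using that X_subset by (intro sum_nonneg weight_nonneg) auto
  moreover have "0 \<le> w' {Some a, Some b}" if "a \<in> X" "b \<in> X" "a \<noteq> b" for a b
    using that X_subset weight_nonneg by (auto simp: sep_w_Some_Some)
  moreover fix x y assume "x \<in> V'" "y \<in> V'" "x \<noteq> y"
  ultimately show "0 \<le> w' {x, y}"
    unfolding sep_V_def by (auto simp: insert_commute)
qed

definition contract :: "'v \<Rightarrow> 'v option" where
  "contract v = (if v \<in> X then Some v else None)"

definition lift :: "('v option set \<Rightarrow> real) \<Rightarrow> 'v set \<Rightarrow> real" where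
  "lift f e = (if e \<in> edges V w \<and> e \<inter> X \<noteq> {} then f (contract ` e) else 0)"

lemma contract_mem_cut_iff:
  assumes e: "e \<in> edges V w" "e \<inter> X \<noteq> {}" and "Y \<subseteq> X"
  shows "contract ` e \<in> cut V' w' (Some ` Y) \<longleftrightarrow> e \<in> cut V w Y"
proof -
  obtain x y where xy: "x \<in> V" "y \<in> V" "x \<noteq> y" "e = {x, y}" "w {x, y} > 0"
    using e(1) unfolding edges_def by blast
  obtain u v where uv: "u \<in> V" "v \<in> V" "u \<noteq> v" "e = {u, v}" "w {u, v} > 0" "u \<in> X"
  proof (cases "x \<in> X")
    case True
    show ?thesis
      by (rule that[of x y]) (use xy True in auto)
  next
    case False
    then have "y \<in> X"
      using e(2) xy(4) by auto
    show ?thesis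
      by (rule that[of y x]) (use xy \<open>y \<in> X\<close> in \<open>auto simp: insert_commute\<close>)
  qed
  have contract_V': "contract x \<in> V'" for x
    by (auto simp: contract_def sep_V_def)
  have contract_ne: "contract u \<noteq> contract v"
    using uv by (auto simp: contract_def)
  have "w {u, v} \<le> w' {contract u, contract v}"
    using uv w'_Some_None_ge[of u v] by (auto simp: contract_def sep_w_Some_Some)
  then have "{contract u, contract v} \<in> cut V' w' (Some ` Y) \<longleftrightarrow>
      (contract u \<in> Some ` Y \<longleftrightarrow> contract v \<notin> Some ` Y)"
    using doubleton_mem_cut_iff[OF contract_V' contract_V' contract_ne] uv by simp
  also have "\<dots> \<longleftrightarrow> (u \<in> Y \<longleftrightarrow> v \<notin> Y)"
    using \<open>Y \<subseteq> X\<close> by (auto simp: contract_def)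
  also have "\<dots> \<longleftrightarrow> e \<in> cut V w Y"
    using doubleton_mem_cut_iff[OF uv(1-3)] uv by simp
  finally show ?thesis
    using uv(4) by simp
qed

lemma chi_cut_eq_lift:
  assumes "Y \<subseteq> X"
  shows "chi (cut V w Y) = lift (chi (cut V' w' (Some ` Y)))"
proof
  fix e
  show "chi (cut V w Y) e = lift (chi (cut V' w' (Some ` Y))) e"
  proof (cases "e \<in> edges V w \<and> e \<inter> X \<noteq> {}")
    case True
    then show ?thesis
      using contract_mem_cut_iff[OF _ _ assms, of e] by (simp add: chi_def lift_def indicator_def)
  next
    case False
    then have "e \<notin> edges V w \<or> e \<inter> Y = {}"
      using assms by blast
    then have "e \<notin> cut V w Y"
      unfolding cut_def by auto
    then show ?thesis
      using False by (auto simp: chi_def lift_def)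
  qed
qed

lemma cut_weight_sep:
  assumes "Y \<subseteq> X"
  shows "cut_weight w' (cut V' w' (Some ` Y)) = cut_weight w (cut V w Y)"
proof -
  have V'_minus: "V' - Some ` Y = insert None (Some ` (X - Y))"
    by (auto simp: sep_V_def)
  have "Some ` Y \<subseteq> V'"
    using assms by (auto simp: sep_V_def)
  then have "cut_weight w' (cut V' w' (Some ` Y)) = (\<Sum>a\<in>Some ` Y. \<Sum>b\<in>V' - Some ` Y. w' {a, b})"
    by (rule cut_weight_eq_sum[OF weighted_graph_sep])
  also have "\<dots> = (\<Sum>a\<in>Y. w' {Some a, None} + (\<Sum>b\<in>X - Y. w' {Some a, Some b}))"
    unfolding V'_minus using finite_X by (simp add: sum.reindex)
  also have "\<dots> = (\<Sum>a\<in>Y. (\<Sum>b\<in>V - X. w {a, b}) + (\<Sum>b\<in>X - Y. w {a, b}))"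
    using assms by (intro sum.cong) (auto simp: w'_Some_None sep_w_Some_Some)
  also have "\<dots> = (\<Sum>a\<in>Y. \<Sum>b\<in>V - Y. w {a, b})"
  proof (rule sum.cong[OF refl])
    fix a
    have "V - Y = (V - X) \<union> (X - Y)" "(V - X) \<inter> (X - Y) = {}"
      using assms X_subset by blast+
    then show "(\<Sum>b\<in>V - X. w {a, b}) + (\<Sum>b\<in>X - Y. w {a, b}) = (\<Sum>b\<in>V - Y. w {a, b})"
      using finite_V finite_X by (simp add: sum.union_disjoint)
  qed
  also have "\<dots> = cut_weight w (cut V w Y)"
    using cut_weight_eq_sum[OF weighted_graph] assms X_subset by auto
  finally show ?thesis .
qed

lemma is_shore_subset: "Y \<noteq> {} \<Longrightarrow> Y \<subseteq> X \<Longrightarrow> is_shore V Y"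
  using X_subset compl_X_ne unfolding is_shore_def by blast

lemma is_shore_sep: "Y \<noteq> {} \<Longrightarrow> Y \<subseteq> X \<Longrightarrow> is_shore V' (Some ` Y)"
  unfolding is_shore_def sep_V_def by blast

lemma sep_shore_cases:
  assumes "is_shore V' B"
  obtains Y where "Y \<noteq> {}" "Y \<subseteq> X" "cut V' w' B = cut V' w' (Some ` Y)"
proof -
  define B0 where "B0 = (if None \<in> B then V' - B else B)"
  have "cut V' w' B0 = cut V' w' B"
    unfolding B0_def by (simp add: cut_Diff)
  moreover have "B0 \<noteq> {}" "B0 \<subseteq> Some ` X"
    using assms unfolding B0_def is_shore_def sep_V_def by auto
  moreover have "Some ` the ` B0 = B0"
    using \<open>B0 \<subseteq> Some ` X\<close> by force
  ultimately show ?thesis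
    using that[of "the ` B0"] by force
qed

lemma mincuts_sep: "mincuts V' w' = (\<lambda>Y. cut V' w' (Some ` Y)) ` mincut_shores_in V w X"
proof -
  let ?min = "cut_weight w (cut V w X)"
  have min_sep: "?min \<le> cut_weight w' (cut V' w' B)" if B: "is_shore V' B" for B
  proof -
    obtain Y where "Y \<noteq> {}" "Y \<subseteq> X" "cut V' w' B = cut V' w' (Some ` Y)"
      using sep_shore_cases[OF B] .
    then show ?thesis
      using mincuts_weight_le[OF mincut is_shore_subset] cut_weight_sep by simp
  qed
  have "cut V' w' (Some ` X) \<in> mincuts V' w'"
    using min_sep cut_weight_sep[of X] by (intro mincutsI is_shore_sep X_ne) auto
  then have iff: "cut V' w' (Some ` Y) \<in> mincuts V' w' \<longleftrightarrow> cut V w Y \<in> mincuts V w"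
    if "Y \<noteq> {}" "Y \<subseteq> X" for Y
    using that mincuts_iff_weight_eq[OF _ is_shore_sep[OF that]] cut_weight_sep
      mincuts_iff_weight_eq[OF mincut is_shore_subset[OF that]] by simp
  show ?thesis
  proof (intro set_eqI iffI)
    fix S assume "S \<in> mincuts V' w'"
    moreover obtain B where "S = cut V' w' B" "is_shore V' B"
      using \<open>S \<in> mincuts V' w'\<close> unfolding mincuts_def by blast
    moreover obtain Y where "Y \<noteq> {}" "Y \<subseteq> X" "cut V' w' B = cut V' w' (Some ` Y)"
      using sep_shore_cases[OF \<open>is_shore V' B\<close>] .
    ultimately show "S \<in> (\<lambda>Y. cut V' w' (Some ` Y)) ` mincut_shores_in V w X"
      using iff unfolding mincut_shores_in_def by auto
  next
    fix S assume "S \<in> (\<lambda>Y. cut V' w' (Some ` Y)) ` mincut_shores_in V w X"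
    then show "S \<in> mincuts V' w'"
      using iff unfolding mincut_shores_in_def by auto
  qed
qed

lemma linear_lift:
  "Vector_Spaces.linear (\<lambda>(c::real) (f::'v option set \<Rightarrow> real) e. c * f e)
     (\<lambda>(c::real) (f::'v set \<Rightarrow> real) e. c * f e) lift"
  unfolding Vector_Spaces.linear_iff
  using fun_vs.vector_space_axioms[where 'a="'v option set"] fun_vs.vector_space_axioms[where 'a="'v set"]
  by (auto simp: lift_def fun_eq_iff)

lemma sep_edge_eq_contract:
  assumes "e' \<in> edges V' w'"
  obtains e where "e \<in> edges V w" "e \<inter> X \<noteq> {}" "e' = contract ` e"
proof -
  have key: "\<exists>e\<in>edges V w. e \<inter> X \<noteq> {} \<and> {Some a, q} = contract ` e"
    if aq: "a \<in> X" "q \<in> V'" "Some a \<noteq> q" "w' {Some a, q} > 0" for a q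
  proof (cases q)
    case None
    then have "w' {Some a, None} > 0"
      using aq(4) by simp
    then obtain b where "b \<in> V - X" "w {a, b} > 0"
      using w'_Some_None_pos[OF aq(1)] by blast
    then show ?thesis
      using aq None X_subset doubleton_mem_edges_iff[of a V b w]
      by (intro bexI[of _ "{a, b}"]) (auto simp: contract_def)
  next
    case (Some b)
    then show ?thesis
      using aq X_subset doubleton_mem_edges_iff[of a V b w]
      by (intro bexI[of _ "{a, b}"]) (auto simp: sep_V_def sep_w_Some_Some contract_def)
  qed
  obtain p q where pq: "p \<in> V'" "q \<in> V'" "p \<noteq> q" "e' = {p, q}" "w' {p, q} > 0"
    using assms unfolding edges_def by blast
  consider a where "p = Some a" "a \<in> X" | a where "q = Some a" "a \<in> X"
    using pq(1-3) unfolding sep_V_def by auto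
  then have "\<exists>e\<in>edges V w. e \<inter> X \<noteq> {} \<and> e' = contract ` e"
  proof cases
    case 1
    then show ?thesis
      using key[of a q] pq by simp
  next
    case 2
    then show ?thesis
      using key[of a p] pq by (simp add: insert_commute)
  qed
  then show ?thesis
    using that by blast
qed

lemma inj_on_lift: "inj_on lift {f. \<forall>e. e \<notin> edges V' w' \<longrightarrow> f e = 0}"
proof (rule inj_onI, rule ext)
  fix f g e'
  assume f: "f \<in> {f. \<forall>e. e \<notin> edges V' w' \<longrightarrow> f e = 0}"
    and g: "g \<in> {f. \<forall>e. e \<notin> edges V' w' \<longrightarrow> f e = 0}" and "lift f = lift g"
  show "f e' = g e'"
  proof (cases "e' \<in> edges V' w'")
    case True
    then obtain e where "e \<in> edges V w" "e \<inter> X \<noteq> {}" "e' = contract ` e"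
      by (rule sep_edge_eq_contract)
    then show ?thesis
      using fun_cong[OF \<open>lift f = lift g\<close>, of e] by (simp add: lift_def)
  next
    case False
    then show ?thesis
      using f g by simp
  qed
qed

lemma cdim_sep: "cdim V' w' = fun_vs.dim ((\<lambda>Y. chi (cut V w Y)) ` mincut_shores_in V w X)"
proof -
  let ?F = "{f. \<forall>e. e \<notin> edges V' w' \<longrightarrow> f e = 0}"
  have "chi S \<in> ?F" if S: "S \<in> mincuts V' w'" for S
  proof -
    obtain B where "S = cut V' w' B"
      using S unfolding mincuts_def by blast
    then have "S \<subseteq> edges V' w'"
      using cut_subset_edges by simp
    then show ?thesis
      by (auto simp: chi_def indicator_def)
  qed
  then have "chi ` mincuts V' w' \<subseteq> ?F"
    by blast
  then have "fun_vs.span (chi ` mincuts V' w') \<subseteq> ?F"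
    by (rule fun_vs.span_minimal) (auto simp: fun_vs.subspace_def)
  then have "fun_vs.dim (lift ` chi ` mincuts V' w') = cdim V' w'"
    unfolding cdim_def
    by (intro dim_image_eq_inj[OF linear_lift] inj_on_subset[OF inj_on_lift])
  moreover have "lift ` chi ` mincuts V' w' = (\<lambda>Y. chi (cut V w Y)) ` mincut_shores_in V w X"
    unfolding mincuts_sep image_image using chi_cut_eq_lift
    by (intro image_cong) (auto simp: mincut_shores_in_def)
  ultimately show ?thesis
    by simp
qed

end

lemma rtrancl_edge_rel_crosses:
  assumes "(x, y) \<in> (edge_rel E)\<^sup>*" "x \<in> A" "y \<notin> A"
  shows "\<exists>a b. {a, b} \<in> E \<and> a \<in> A \<and> b \<notin> A"
  using assms
proof (induction rule: rtrancl_induct)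
  case (step y z)
  then show ?case
    by (cases "y \<in> A") (auto simp: edge_rel_def)
qed simp

lemma cut_nonempty:
  assumes "connected_graph V w" "is_shore V X"
  shows "cut V w X \<noteq> {}"
proof -
  obtain x y where "x \<in> X" "y \<in> V - X" and "x \<in> V"
    using assms(2) unfolding is_shore_def by blast
  then have "(x, y) \<in> (edge_rel (edges V w))\<^sup>*"
    using assms(1) unfolding connected_graph_def by simp
  then obtain a b where "{a, b} \<in> edges V w" "a \<in> X" "b \<notin> X"
    using rtrancl_edge_rel_crosses[of x y _ X] \<open>x \<in> X\<close> \<open>y \<in> V - X\<close> by blast
  moreover have "{a, b} \<inter> X = {a}"
    using \<open>a \<in> X\<close> \<open>b \<notin> X\<close> by blast
  ultimately have "{a, b} \<in> cut V w X"
    unfolding cut_def by simp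
  then show ?thesis
    by blast
qed

lemma connected_edges_const:
  assumes conn: "connected_edges S" and nonempty: "{} \<notin> S"
    and adjacent: "\<And>e1 e2. e1 \<in> S \<Longrightarrow> e2 \<in> S \<Longrightarrow> e1 \<inter> e2 \<noteq> {} \<Longrightarrow> h e1 = h e2"
    and "e0 \<in> S" "e \<in> S"
  shows "h e = h e0"
proof -
  have "e0 \<noteq> {}" "e \<noteq> {}"
    using nonempty \<open>e0 \<in> S\<close> \<open>e \<in> S\<close> by auto
  then obtain u0 u where "u0 \<in> e0" "u \<in> e"
    by blast
  then have "(u0, u) \<in> (edge_rel S)\<^sup>*"
    using conn \<open>e0 \<in> S\<close> \<open>e \<in> S\<close> unfolding connected_edges_def by blast
  then have "h e' = h e0" if "e' \<in> S" "u \<in> e'" for e'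
    using that
  proof (induction arbitrary: e' rule: rtrancl_induct)
    case base
    then have "e' \<inter> e0 \<noteq> {}"
      using \<open>u0 \<in> e0\<close> by blast
    then show ?case
      using adjacent[OF base(1) \<open>e0 \<in> S\<close>] by simp
  next
    case (step a b)
    then have "{a, b} \<in> S"
      unfolding edge_rel_def by simp
    moreover have "e' \<inter> {a, b} \<noteq> {}"
      using step.prems(2) by blast
    ultimately show ?case
      using adjacent[OF step.prems(1)] step.IH[of "{a, b}"] by simp
  qed
  then show ?thesis
    using \<open>u \<in> e\<close> \<open>e \<in> S\<close> by blast
qed

text \<open>The edge functions that factor through contracting V - X to a single vertex, i.e. the
  image of the lift map of the separation at X.\<close>

definition shore_space :: "'v set \<Rightarrow> ('v set \<Rightarrow> real) \<Rightarrow> 'v set \<Rightarrow> ('v set \<Rightarrow> real) set" where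
  "shore_space V w X = {h. (\<forall>e. e \<notin> edges V w \<or> e \<inter> X = {} \<longrightarrow> h e = 0) \<and>
      (\<forall>e1\<in>cut V w X. \<forall>e2\<in>cut V w X. e1 \<inter> e2 \<inter> X \<noteq> {} \<longrightarrow> h e1 = h e2)}"

lemma shore_spaceD:
  assumes "h \<in> shore_space V w X"
  shows "e \<notin> edges V w \<or> e \<inter> X = {} \<Longrightarrow> h e = 0"
    and "e1 \<in> cut V w X \<Longrightarrow> e2 \<in> cut V w X \<Longrightarrow> e1 \<inter> e2 \<inter> X \<noteq> {} \<Longrightarrow> h e1 = h e2"
  using assms unfolding shore_space_def by auto

lemma subspace_shore_space: "fun_vs.subspace (shore_space V w X)"
  unfolding fun_vs.subspace_def shore_space_def by auto

lemma mem_cut_subset_iff: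
  assumes "e \<in> cut V w X" "x \<in> e \<inter> X" "Y \<subseteq> X"
  shows "e \<in> cut V w Y \<longleftrightarrow> x \<in> Y"
proof -
  obtain p q where pq: "p \<in> V" "q \<in> V" "p \<noteq> q" "e = {p, q}" "w {p, q} > 0" "p \<in> X \<longleftrightarrow> q \<notin> X"
    using assms(1) unfolding mem_cut_iff by blast
  then have "e \<in> cut V w Y \<longleftrightarrow> (p \<in> Y \<longleftrightarrow> q \<notin> Y)"
    using doubleton_mem_cut_iff[OF pq(1-3)] by simp
  then show ?thesis
    using assms(2,3) pq(4,6) by auto
qed

lemma chi_cut_mem_shore_space:
  assumes "Y \<subseteq> X"
  shows "chi (cut V w Y) \<in> shore_space V w X"
  unfolding shore_space_def
proof (intro CollectI conjI allI ballI impI)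
  fix e assume "e \<notin> edges V w \<or> e \<inter> X = {}"
  then have "e \<notin> edges V w \<or> e \<inter> Y = {}"
    using assms by blast
  then show "chi (cut V w Y) e = 0"
    unfolding chi_def cut_def by auto
next
  fix e1 e2 assume "e1 \<in> cut V w X" "e2 \<in> cut V w X" "e1 \<inter> e2 \<inter> X \<noteq> {}"
  then obtain x where x1: "x \<in> e1 \<inter> X" and x2: "x \<in> e2 \<inter> X"
    by blast
  have "e1 \<in> cut V w Y \<longleftrightarrow> e2 \<in> cut V w Y"
    using mem_cut_subset_iff[OF \<open>e1 \<in> cut V w X\<close> x1 assms]
      mem_cut_subset_iff[OF \<open>e2 \<in> cut V w X\<close> x2 assms] by simp
  then show "chi (cut V w Y) e1 = chi (cut V w Y) e2"
    by (simp add: chi_def indicator_def)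
qed

lemma span_mincut_shores_in_subset:
  "fun_vs.span ((\<lambda>Y. chi (cut V w Y)) ` mincut_shores_in V w X) \<subseteq> shore_space V w X"
  using chi_cut_mem_shore_space
  by (intro fun_vs.span_minimal subspace_shore_space) (auto simp: mincut_shores_in_def)

text \<open>A common element is constant along adjacent cut edges, whichever side they meet on, and
  vanishes on all other edges.\<close>

lemma shore_space_Int_subset:
  assumes "X \<subseteq> V" "connected_edges (cut V w X)"
  shows "shore_space V w X \<inter> shore_space V w (V - X) \<subseteq> fun_vs.span {chi (cut V w X)}"
proof
  fix h assume "h \<in> shore_space V w X \<inter> shore_space V w (V - X)"
  then have hX: "h \<in> shore_space V w X" and hVX: "h \<in> shore_space V w (V - X)"
    by auto
  obtain c where c: "\<And>e. e \<in> cut V w X \<Longrightarrow> h e = c"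
  proof (cases "cut V w X = {}")
    case False
    then obtain e0 where "e0 \<in> cut V w X"
      by blast
    have "{} \<notin> cut V w X"
      by (auto simp: mem_cut_iff)
    moreover have "h e1 = h e2"
      if e12: "e1 \<in> cut V w X" "e2 \<in> cut V w X" "e1 \<inter> e2 \<noteq> {}" for e1 e2
    proof -
      obtain v where v: "v \<in> e1 \<inter> e2"
        using e12(3) by blast
      have "e1 \<subseteq> V"
        using e12(1) by (auto simp: mem_cut_iff)
      then consider "v \<in> X" | "v \<in> V - X"
        using v by blast
      then show ?thesis
      proof cases
        case 1
        then show ?thesis
          using shore_spaceD(2)[OF hX e12(1,2)] v by blast
      next
        case 2
        then show ?thesis
          using shore_spaceD(2)[OF hVX, unfolded cut_Diff, OF e12(1,2)] v by blast
      qed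
    qed
    ultimately have "h e = h e0" if "e \<in> cut V w X" for e
      by (rule connected_edges_const[OF assms(2) _ _ \<open>e0 \<in> cut V w X\<close> that])
    then show ?thesis
      by (rule that)
  qed (use that in blast)
  have "h e = 0" if "e \<notin> cut V w X" for e
  proof (cases "e \<in> edges V w")
    case True
    then obtain p q where pq: "p \<in> V" "q \<in> V" "p \<noteq> q" "e = {p, q}" "w {p, q} > 0"
      unfolding edges_def by blast
    then have "\<not> (p \<in> X \<longleftrightarrow> q \<notin> X)"
      using that doubleton_mem_cut_iff[OF pq(1-3)] by simp
    then consider "e \<inter> X = {}" | "e \<inter> (V - X) = {}"
      using pq by auto
    then show ?thesis
      by cases (auto intro: shore_spaceD(1)[OF hX] shore_spaceD(1)[OF hVX])
  next
    case False
    then show ?thesis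
      by (rule shore_spaceD(1)[OF hX, OF disjI1])
  qed
  with c have "h = (\<lambda>e. c * chi (cut V w X) e)"
    by (auto simp: chi_def indicator_def)
  then show "h \<in> fun_vs.span {chi (cut V w X)}"
    by (metis fun_vs.span_base fun_vs.span_scale singletonI)
qed

theorem lemma14:
  fixes V :: "'v set" and w :: "'v set \<Rightarrow> real" and X0 :: "'v set"
  assumes "weighted_graph V w"
    and "connected_graph V w"
    and "is_shore V X0"
    and "cut V w X0 \<in> mincuts V w"
    and "crossless V w X0"
    and "\<not> star_cut V w (cut V w X0)"
  shows "int (cdim V w) \<le> int (cdim (sep_V X0) (sep_w w X0 (V - X0)))
                          + int (cdim (sep_V (V - X0)) (sep_w w (V - X0) X0)) - 1 \<and>
         (connected_edges (cut V w X0) \<longrightarrow>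
         int (cdim V w) = int (cdim (sep_V X0) (sep_w w X0 (V - X0)))
                          + int (cdim (sep_V (V - X0)) (sep_w w (V - X0) X0)) - 1)"
proof -
  interpret G0: separation V w X0
    using assms(1,3,4) by unfold_locales
  interpret G1: separation V w "V - X0"
    using assms(1,3,4) by unfold_locales (auto simp: cut_Diff is_shore_def)
  define A where "A = (\<lambda>Y. chi (cut V w Y)) ` mincut_shores_in V w X0"
  define B where "B = (\<lambda>Y. chi (cut V w Y)) ` mincut_shores_in V w (V - X0)"
  define z where "z = chi (cut V w X0)"
  have "V - (V - X0) = X0"
    using G0.X_subset by blast
  then have dims: "cdim V w = fun_vs.dim (A \<union> B)"
    "cdim (sep_V X0) (sep_w w X0 (V - X0)) = fun_vs.dim A"
    "cdim (sep_V (V - X0)) (sep_w w (V - X0) X0) = fun_vs.dim B"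
    unfolding cdim_def A_def B_def mincuts_crossless_eq[OF assms(5)] image_Un image_image
    using G0.cdim_sep G1.cdim_sep by (simp_all add: cdim_def)
  have shores: "X0 \<in> mincut_shores_in V w X0" "V - X0 \<in> mincut_shores_in V w (V - X0)"
    using assms(4) G0.X_ne G1.X_ne by (simp_all add: mincut_shores_in_def cut_Diff)
  have "finite A" "finite B"
    unfolding A_def B_def using G0.finite_X G1.finite_X by (simp_all add: finite_mincut_shores_in)
  moreover have "z \<in> A" "z \<in> B"
    unfolding A_def B_def z_def using shores
    by (intro rev_image_eqI[of X0] rev_image_eqI[of "V - X0"]; simp add: cut_Diff)+
  moreover have "z \<noteq> 0"
    using cut_nonempty[OF assms(2,3)] unfolding z_def chi_def by (auto simp: fun_eq_iff indicator_def)
  ultimately have dim_Un: "fun_vs.dim (A \<union> B) + 1 \<le> fun_vs.dim A + fun_vs.dim B"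
    "fun_vs.span A \<inter> fun_vs.span B \<subseteq> fun_vs.span {z} \<Longrightarrow>
       fun_vs.dim (A \<union> B) + 1 = fun_vs.dim A + fun_vs.dim B"
    using fun_vs.dim_Un_shared_vector[OF _ _ fun_vs.span_base fun_vs.span_base] by blast+
  have "fun_vs.span A \<inter> fun_vs.span B \<subseteq> fun_vs.span {z}"
    if "connected_edges (cut V w X0)"
    using span_mincut_shores_in_subset[of V w X0] span_mincut_shores_in_subset[of V w "V - X0"]
      shore_space_Int_subset[OF G0.X_subset that]
    unfolding A_def B_def z_def by blast
  then show ?thesis
    using dim_Un unfolding dims by fastforce
qed

end
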